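(* Let $\mathfrak{P}_1=(\rho^{(1)}_{t_0},\mathcal{E}^{(1)}_{t_1\leftarrow t_0},\dots,\mathcal{E}^{(1)}_{t_n\leftarrow t_{n-1}})$ and $\mathfrak{P}_2=(\rho^{(2)}_{t_0},\mathcal{E}^{(2)}_{t_1\leftarrow t_0},\dots,\mathcal{E}^{(2)}_{t_n\leftarrow t_{n-1}})$ be multi-time quantum processes, with measurements $\{\Pi^{(1),t_k}_{b}\}$ and $\{\Pi^{(2),t_k}_{c}\}$ respectively, and let $\mathfrak{P}_1\otimes\mathfrak{P}_2$ be the process with initial state $\rho^{(1)}_{t_0}\otimes\rho^{(2)}_{t_0}$, channels $\mathcal{E}^{(1)}_{t_j\leftarrow t_{j-1}}\otimes\mathcal{E}^{(2)}_{t_j\leftarrow t_{j-1}}$, and product measurements $\{\Pi^{(1),t_k}_{b}\otimes\Pi^{(2),t_k}_{c}\}_{b,c}$. Then $$\mathcal{N}\big(\overrightarrow{Q}_{\rm KD}(\mathfrak{P}_1\otimes\mathfrak{P}_2)\big)=\mathcal{N}\big(\overrightarrow{Q}_{\rm KD}(\mathfrak{P}_1)\big)\mathcal{N}\big(\overrightarrow{Q}_{\rm KD}(\mathfrak{P}_2)\big)+\mathcal{N}\big(\overrightarrow{Q}_{\rm KD}(\mathfrak{P}_1)\big)+\mathcal{N}\big(\overrightarrow{Q}_{\rm KD}(\mathfrak{P}_2)\big),$$ and, with $\mathcal{N}'[Q]=\log\sum|Q|$, $$\mathcal{N}'\big(\overrightarrow{Q}_{\rm KD}(\mathfrak{P}_1\otimes\mathfrak{P}_2)\big)=\mathcal{N}'\big(\overrightarrow{Q}_{\rm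 KD}(\mathfrak{P}_1)\big)+\mathcal{N}'\big(\overrightarrow{Q}_{\rm KD}(\mathfrak{P}_2)\big).$$ The same holds for the left and doubled temporal KD distributions.
   Context: A multi-time quantum process $(\rho_{t_0},\mathcal{E}_{t_1\leftarrow t_0},\dots,\mathcal{E}_{t_n\leftarrow t_{n-1}})$ consists of a density operator and CPTP maps on finite-dimensional spaces, extended linearly to all operators; complete families of orthogonal projectors are fixed at each time. $\overrightarrow{Q}_{\rm KD}(b_n,\dots,b_0)=\operatorname{Tr}[\mathcal{E}_{t_n\leftarrow t_{n-1}}(\cdots\mathcal{E}_{t_1\leftarrow t_0}(\rho_{t_0}\Pi^{t_0}_{b_0})\Pi^{t_1}_{b_1}\cdots)\Pi^{t_n}_{b_n}]$; $\overleftarrow{Q}_{\rm KD}(a_n,\dots,a_0)=\operatorname{Tr}[\Pi^{t_n}_{a_n}\mathcal{E}_{t_n\leftarrow t_{n-1}}(\cdots\Pi^{t_1}_{a_1}\mathcal{E}_{t_1\leftarrow t_0}(\Pi^{t_0}_{a_0}\rho_{t_0})\cdots)]$; $\overleftrightarrow{Q}_{\rm KD}(a;b)=\operatorname{Tr}[\Pi^{t_n}_{a_n}\mathcal{E}_{t_n\leftarrow t_{n-1}}(\cdots\Pi^{t_1}_{a_1}\mathcal{E}_{t_1\leftarrow t_0}(\Pi^{t_0}_{a_0}\rho_{t_0}\Pi^{t_0}_{b_0})\Pi^{t_1}_{b_1}\cdots)\Pi^{t_n}_{b_n}]$. For any such distribution $Q$, $\mathcal{N}[Q]=\sum_{\text{all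 outcomes}}|Q|-1$. *)

theory Defs
  imports Complex_Main "Jordan_Normal_Form.Matrix"
begin

definition mtrace :: "complex mat \<Rightarrow> complex" where
  "mtrace A = (\<Sum>i<dim_row A. A $$ (i, i))"

definition madj :: "complex mat \<Rightarrow> complex mat" where
  "madj A = mat (dim_col A) (dim_row A) (\<lambda>(i, j). cnj (A $$ (j, i)))"

definition psd :: "nat \<Rightarrow> complex mat \<Rightarrow> bool" where
  "psd d A \<longleftrightarrow> A \<in> carrier_mat d d \<and>
     (\<forall>v :: nat \<Rightarrow> complex.
        let q = (\<Sum>i<d. \<Sum>j<d. cnj (v i) * A $$ (i, j) * v j) in Im q = 0 \<and> Re q \<ge> 0)"

definition density :: "nat \<Rightarrow> complex mat \<Rightarrow> bool" where
  "density d \<rho> \<longleftrightarrow> psd d \<rho> \<and> mtrace \<rho> = 1"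

definition kron :: "complex mat \<Rightarrow> complex mat \<Rightarrow> complex mat" where
  "kron A B = mat (dim_row A * dim_row B) (dim_col A * dim_col B)
     (\<lambda>(i, j). A $$ (i div dim_row B, j div dim_col B) * B $$ (i mod dim_row B, j mod dim_col B))"

definition munit :: "nat \<Rightarrow> nat \<Rightarrow> nat \<Rightarrow> complex mat" where
  "munit d i j = mat d d (\<lambda>(r, c). if r = i \<and> c = j then 1 else 0)"

definition lin_map :: "nat \<Rightarrow> nat \<Rightarrow> (complex mat \<Rightarrow> complex mat) \<Rightarrow> bool" where
  "lin_map d d' E \<longleftrightarrow>
     (\<forall>X \<in> carrier_mat d d. E X \<in> carrier_mat d' d') \<and>
     (\<forall>X \<in> carrier_mat d d. \<forall>Y \<in> carrier_mat d d. \<forall>a b :: complex.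
        E (a \<cdot>\<^sub>m X + b \<cdot>\<^sub>m Y) = a \<cdot>\<^sub>m E X + b \<cdot>\<^sub>m E Y)"

text \<open>Ampliation id_m \<otimes> E acting on (m*d) x (m*d) matrices (block (i,j) is d x d),
  producing an (m*d') x (m*d') matrix whose block (i,j) is E applied to block (i,j).\<close>
definition ampl :: "nat \<Rightarrow> nat \<Rightarrow> nat \<Rightarrow> (complex mat \<Rightarrow> complex mat) \<Rightarrow> complex mat \<Rightarrow> complex mat" where
  "ampl m d d' E X = mat (m * d') (m * d')
     (\<lambda>(r, c). E (mat d d (\<lambda>(a, b). X $$ ((r div d') * d + a, (c div d') * d + b)))
                $$ (r mod d', c mod d'))"

definition cptp :: "nat \<Rightarrow> nat \<Rightarrow> (complex mat \<Rightarrow> complex mat) \<Rightarrow> bool" where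
  "cptp d d' E \<longleftrightarrow> lin_map d d' E \<and>
     (\<forall>m X. psd (m * d) X \<longrightarrow> psd (m * d') (ampl m d d' E X)) \<and>
     (\<forall>X \<in> carrier_mat d d. mtrace (E X) = mtrace X)"

text \<open>Tensor product E1 \<otimes> E2 of linear maps E1: M_d1 -> M_d1', E2: M_d2 -> M_d2',
  defined as the linear extension of (E1 \<otimes> E2)(A \<otimes> B) = E1 A \<otimes> E2 B via matrix units.\<close>
definition tensor_map :: "nat \<Rightarrow> nat \<Rightarrow> nat \<Rightarrow> nat \<Rightarrow>
    (complex mat \<Rightarrow> complex mat) \<Rightarrow> (complex mat \<Rightarrow> complex mat) \<Rightarrow> complex mat \<Rightarrow> complex mat" where
  "tensor_map d1 d2 d1' d2' E1 E2 X = mat (d1' * d2') (d1' * d2')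
     (\<lambda>(r, c). \<Sum>i<d1. \<Sum>j<d1. \<Sum>k<d2. \<Sum>l<d2.
        X $$ (i * d2 + k, j * d2 + l) * kron (E1 (munit d1 i j)) (E2 (munit d2 k l)) $$ (r, c))"

definition proj_family :: "nat \<Rightarrow> 'b set \<Rightarrow> ('b \<Rightarrow> complex mat) \<Rightarrow> bool" where
  "proj_family d B P \<longleftrightarrow> finite B \<and>
     (\<forall>b \<in> B. P b \<in> carrier_mat d d \<and> P b * P b = P b \<and> madj (P b) = P b) \<and>
     (\<forall>b \<in> B. \<forall>b' \<in> B. b \<noteq> b' \<longrightarrow> P b * P b' = 0\<^sub>m d d) \<and>
     mat d d (\<lambda>(i, j). \<Sum>b\<in>B. P b $$ (i, j)) = 1\<^sub>m d"

text \<open>Times t_0..t_n; Hilbert space dimension d k at time t_k; initial state rho on C^(d 0);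
  E j (j = 1..n) is the channel E_{t_j <- t_{j-1}}; P k b are projectors at t_k, outcomes B k.\<close>
definition mt_process :: "nat \<Rightarrow> (nat \<Rightarrow> nat) \<Rightarrow> complex mat \<Rightarrow> (nat \<Rightarrow> complex mat \<Rightarrow> complex mat)
    \<Rightarrow> (nat \<Rightarrow> 'b set) \<Rightarrow> (nat \<Rightarrow> 'b \<Rightarrow> complex mat) \<Rightarrow> bool" where
  "mt_process n d \<rho> E B P \<longleftrightarrow> density (d 0) \<rho> \<and>
     (\<forall>j \<in> {1..n}. cptp (d (j - 1)) (d j) (E j)) \<and>
     (\<forall>k \<le> n. proj_family (d k) (B k) (P k))"

definition outcomes :: "nat \<Rightarrow> (nat \<Rightarrow> 'b set) \<Rightarrow> (nat \<Rightarrow> 'b) set" where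
  "outcomes n B = PiE {..n} B"

fun kd_right_st :: "complex mat \<Rightarrow> (nat \<Rightarrow> complex mat \<Rightarrow> complex mat) \<Rightarrow> (nat \<Rightarrow> 'b \<Rightarrow> complex mat)
    \<Rightarrow> (nat \<Rightarrow> 'b) \<Rightarrow> nat \<Rightarrow> complex mat" where
  "kd_right_st \<rho> E P b 0 = \<rho> * P 0 (b 0)"
| "kd_right_st \<rho> E P b (Suc k) = E (Suc k) (kd_right_st \<rho> E P b k) * P (Suc k) (b (Suc k))"

definition QKD_right where
  "QKD_right n \<rho> E P b = mtrace (kd_right_st \<rho> E P b n)"

fun kd_left_st :: "complex mat \<Rightarrow> (nat \<Rightarrow> complex mat \<Rightarrow> complex mat) \<Rightarrow> (nat \<Rightarrow> 'b \<Rightarrow> complex mat)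
    \<Rightarrow> (nat \<Rightarrow> 'b) \<Rightarrow> nat \<Rightarrow> complex mat" where
  "kd_left_st \<rho> E P a 0 = P 0 (a 0) * \<rho>"
| "kd_left_st \<rho> E P a (Suc k) = P (Suc k) (a (Suc k)) * E (Suc k) (kd_left_st \<rho> E P a k)"

definition QKD_left where
  "QKD_left n \<rho> E P a = mtrace (kd_left_st \<rho> E P a n)"

fun kd_both_st :: "complex mat \<Rightarrow> (nat \<Rightarrow> complex mat \<Rightarrow> complex mat) \<Rightarrow> (nat \<Rightarrow> 'b \<Rightarrow> complex mat)
    \<Rightarrow> (nat \<Rightarrow> 'b) \<Rightarrow> (nat \<Rightarrow> 'b) \<Rightarrow> nat \<Rightarrow> complex mat" where
  "kd_both_st \<rho> E P a b 0 = P 0 (a 0) * \<rho> * P 0 (b 0)"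
| "kd_both_st \<rho> E P a b (Suc k) =
     P (Suc k) (a (Suc k)) * E (Suc k) (kd_both_st \<rho> E P a b k) * P (Suc k) (b (Suc k))"

definition QKD_both where
  "QKD_both n \<rho> E P ab = mtrace (kd_both_st \<rho> E P (fst ab) (snd ab) n)"

definition negN :: "('x \<Rightarrow> complex) \<Rightarrow> 'x set \<Rightarrow> real" where
  "negN Q S = (\<Sum>x\<in>S. cmod (Q x)) - 1"

definition logN :: "('x \<Rightarrow> complex) \<Rightarrow> 'x set \<Rightarrow> real" where
  "logN Q S = ln (\<Sum>x\<in>S. cmod (Q x))"

definition prod_E :: "(nat \<Rightarrow> nat) \<Rightarrow> (nat \<Rightarrow> nat) \<Rightarrow> (nat \<Rightarrow> complex mat \<Rightarrow> complex mat)
    \<Rightarrow> (nat \<Rightarrow> complex mat \<Rightarrow> complex mat) \<Rightarrow> nat \<Rightarrow> complex mat \<Rightarrow> complex mat" where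
  "prod_E d1 d2 E1 E2 j = tensor_map (d1 (j - 1)) (d2 (j - 1)) (d1 j) (d2 j) (E1 j) (E2 j)"

definition prod_P :: "(nat \<Rightarrow> 'b \<Rightarrow> complex mat) \<Rightarrow> (nat \<Rightarrow> 'c \<Rightarrow> complex mat)
    \<Rightarrow> nat \<Rightarrow> 'b \<times> 'c \<Rightarrow> complex mat" where
  "prod_P P1 P2 k bc = kron (P1 k (fst bc)) (P2 k (snd bc))"

definition prod_B :: "(nat \<Rightarrow> 'b set) \<Rightarrow> (nat \<Rightarrow> 'c set) \<Rightarrow> nat \<Rightarrow> ('b \<times> 'c) set" where
  "prod_B B1 B2 k = B1 k \<times> B2 k"

end

theory Submission
  imports Defs
begin

text \<open>All three Kirkwood-Dirac recursions have the form \<open>X\<^sub>k = L\<^sub>k E\<^sub>k(X\<^sub>k\<^sub>-\<^sub>1) R\<^sub>k\<close>. For the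
  product process every factor is a Kronecker product, the product channel sends \<open>X \<otimes> Y\<close> to
  \<open>E\<^sub>1(X) \<otimes> E\<^sub>2(Y)\<close>, and the trace of a Kronecker product is the product of the traces; hence
  the distribution factorizes, \<open>Q(b, c) = Q\<^sub>1(b) Q\<^sub>2(c)\<close>, and the total absolute masses
  \<open>S = \<Sum>|Q|\<close> satisfy \<open>S = S\<^sub>1 S\<^sub>2\<close>. Summing a distribution over all outcomes removes the
  measurements by completeness of the projectors, so \<open>\<Sum>Q = tr \<rho> = 1\<close> by trace preservation,
  whence \<open>S\<^sub>1, S\<^sub>2 \<ge> 1\<close>. Both identities then follow from
  \<open>S - 1 = (S\<^sub>1 - 1)(S\<^sub>2 - 1) + (S\<^sub>1 - 1) + (S\<^sub>2 - 1)\<close> and \<open>ln S = ln S\<^sub>1 + ln S\<^sub>2\<close>.\<close>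

lemma add_mult_less_mult:
  fixes i j a b :: nat
  assumes "i < a" and "j < b"
  shows "i * b + j < a * b"
proof -
  have "i * b + j < (i + 1) * b" using assms(2) by simp
  also have "\<dots> \<le> a * b" using assms(1) by (intro mult_le_mono1) simp
  finally show ?thesis .
qed

lemma mod_less_of_less_mult: "i < a * b \<Longrightarrow> i mod b < (b::nat)"
  by (cases "b = 0") auto

lemma sum_lessThan_mult:
  fixes f :: "nat \<Rightarrow> 'a::comm_monoid_add"
  shows "(\<Sum>s<a * b. f s) = (\<Sum>i<a. \<Sum>j<b. f (i * b + j))"
proof -
  have "(\<Sum>s<a * b. f s) = (\<Sum>(i, j)\<in>{..<a} \<times> {..<b}. f (i * b + j))"
    by (rule sum.reindex_bij_witness[where i="\<lambda>(i, j). i * b + j" and j="\<lambda>s. (s div b, s mod b)"])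
       (auto simp: add_mult_less_mult less_mult_imp_div_less mod_less_of_less_mult)
  then show ?thesis by (simp add: sum.cartesian_product)
qed

lemma index_mult_mat_sum:
  assumes "A \<in> carrier_mat d d" and "C \<in> carrier_mat d d" and "i < d" and "j < d"
  shows "(A * C) $$ (i, j) = (\<Sum>k<d. A $$ (i, k) * C $$ (k, j))"
  using assms by (simp add: scalar_prod_def atLeast0LessThan)

section \<open>Kronecker products\<close>

lemma kron_carrier_mat [simp]:
  "A \<in> carrier_mat a a \<Longrightarrow> B \<in> carrier_mat b b \<Longrightarrow> kron A B \<in> carrier_mat (a * b) (a * b)"
  by (simp add: kron_def)

lemma dim_kron [simp]:
  "dim_row (kron A B) = dim_row A * dim_row B" "dim_col (kron A B) = dim_col A * dim_col B"
  by (simp_all add: kron_def)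

lemma index_kron:
  assumes "A \<in> carrier_mat a a" and "B \<in> carrier_mat b b" and "i < a * b" and "j < a * b"
  shows "kron A B $$ (i, j) = A $$ (i div b, j div b) * B $$ (i mod b, j mod b)"
  using assms by (simp add: kron_def)

lemma kron_mult_kron:
  assumes A1: "A1 \<in> carrier_mat a a" and B1: "B1 \<in> carrier_mat a a"
    and A2: "A2 \<in> carrier_mat b b" and B2: "B2 \<in> carrier_mat b b"
  shows "kron A1 A2 * kron B1 B2 = kron (A1 * B1) (A2 * B2)"
proof (rule eq_matI)
  fix r c assume "r < dim_row (kron (A1 * B1) (A2 * B2))" and "c < dim_col (kron (A1 * B1) (A2 * B2))"
  then have r: "r < a * b" and c: "c < a * b" using assms by (auto simp: kron_def)
  have "(kron A1 A2 * kron B1 B2) $$ (r, c)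
      = (\<Sum>i<a. \<Sum>j<b. kron A1 A2 $$ (r, i * b + j) * kron B1 B2 $$ (i * b + j, c))"
    by (simp add: index_mult_mat_sum[OF kron_carrier_mat[OF A1 A2] kron_carrier_mat[OF B1 B2] r c]
        sum_lessThan_mult)
  also have "\<dots> = (\<Sum>i<a. \<Sum>j<b. (A1 $$ (r div b, i) * B1 $$ (i, c div b))
                                  * (A2 $$ (r mod b, j) * B2 $$ (j, c mod b)))"
    by (intro sum.cong refl)
       (simp add: index_kron[OF A1 A2] index_kron[OF B1 B2] r c add_mult_less_mult)
  also have "\<dots> = (\<Sum>i<a. A1 $$ (r div b, i) * B1 $$ (i, c div b))
                 * (\<Sum>j<b. A2 $$ (r mod b, j) * B2 $$ (j, c mod b))"
    by (simp add: sum_product)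
  also have "\<dots> = kron (A1 * B1) (A2 * B2) $$ (r, c)"
    using r c A1 B1 A2 B2
    by (simp add: index_kron[of _ a _ b] index_mult_mat_sum less_mult_imp_div_less mod_less_of_less_mult
        del: index_mult_mat)
  finally show "(kron A1 A2 * kron B1 B2) $$ (r, c) = kron (A1 * B1) (A2 * B2) $$ (r, c)" .
qed (use assms in \<open>auto simp: kron_def\<close>)

lemma kron_mult_kron3:
  assumes L1: "L1 \<in> carrier_mat a a" and M1: "M1 \<in> carrier_mat a a" and R1: "R1 \<in> carrier_mat a a"
    and L2: "L2 \<in> carrier_mat b b" and M2: "M2 \<in> carrier_mat b b" and R2: "R2 \<in> carrier_mat b b"
  shows "kron L1 L2 * kron M1 M2 * kron R1 R2 = kron (L1 * M1 * R1) (L2 * M2 * R2)"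
  unfolding kron_mult_kron[OF L1 M1 L2 M2]
  by (rule kron_mult_kron[OF mult_carrier_mat[OF L1 M1] R1 mult_carrier_mat[OF L2 M2] R2])

lemma mtrace_kron:
  assumes A: "A \<in> carrier_mat a a" and B: "B \<in> carrier_mat b b"
  shows "mtrace (kron A B) = mtrace A * mtrace B"
proof -
  have "mtrace (kron A B) = (\<Sum>i<a. \<Sum>j<b. kron A B $$ (i * b + j, i * b + j))"
    using A B by (simp add: mtrace_def sum_lessThan_mult)
  also have "\<dots> = (\<Sum>i<a. \<Sum>j<b. A $$ (i, i) * B $$ (j, j))"
    by (intro sum.cong refl) (simp add: index_kron[OF A B] add_mult_less_mult)
  also have "\<dots> = mtrace A * mtrace B"
    using A B by (simp add: mtrace_def sum_product)
  finally show ?thesis .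
qed

lemma kron_one_mat: "kron (1\<^sub>m a) (1\<^sub>m b) = 1\<^sub>m (a * b)"
proof (rule eq_matI)
  fix i j assume "i < dim_row (1\<^sub>m (a * b))" and "j < dim_col (1\<^sub>m (a * b))"
  then have i: "i < a * b" and j: "j < a * b" by auto
  have "i div b = j div b \<and> i mod b = j mod b \<longleftrightarrow> i = j"
    by (metis div_mult_mod_eq)
  then show "kron (1\<^sub>m a) (1\<^sub>m b) $$ (i, j) = 1\<^sub>m (a * b) $$ (i, j)"
    using i j less_mult_imp_div_less[OF i] less_mult_imp_div_less[OF j]
      mod_less_of_less_mult[OF i] mod_less_of_less_mult[OF j]
    by (auto simp: kron_def)
qed (simp_all add: kron_def)

text \<open>Matrices of varying dimensions do not form a monoid, so sums of \<open>d \<times> d\<close> matrices are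
  taken entrywise.\<close>

definition msum :: "nat \<Rightarrow> 'x set \<Rightarrow> ('x \<Rightarrow> complex mat) \<Rightarrow> complex mat" where
  "msum d S f = mat d d (\<lambda>(r, c). \<Sum>s\<in>S. f s $$ (r, c))"

lemma msum_carrier_mat [simp]: "msum d S f \<in> carrier_mat d d"
  by (simp add: msum_def)

lemma dim_msum [simp]: "dim_row (msum d S f) = d" "dim_col (msum d S f) = d"
  by (simp_all add: msum_def)

lemma index_msum [simp]: "i < d \<Longrightarrow> j < d \<Longrightarrow> msum d S f $$ (i, j) = (\<Sum>s\<in>S. f s $$ (i, j))"
  by (simp add: msum_def)

lemma msum_cong: "(\<And>s. s \<in> S \<Longrightarrow> f s = g s) \<Longrightarrow> msum d S f = msum d S g"
  unfolding msum_def by (auto intro!: cong_mat sum.cong)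

lemma msum_swap: "msum d A (\<lambda>a. msum d B (\<lambda>b. f a b)) = msum d B (\<lambda>b. msum d A (\<lambda>a. f a b))"
  by (rule eq_matI) (auto intro: sum.swap)

lemma msum_cartesian_product: "msum d (A \<times> B) f = msum d A (\<lambda>a. msum d B (\<lambda>b. f (a, b)))"
  by (rule eq_matI) (auto simp: sum.cartesian_product)

lemma msum_reindex: "inj_on h S \<Longrightarrow> msum d (h ` S) f = msum d S (f \<circ> h)"
  unfolding msum_def by (auto intro!: cong_mat simp: sum.reindex)

lemma msum_singleton: "f x \<in> carrier_mat d d \<Longrightarrow> msum d {x} f = f x"
  by (rule eq_matI) auto

lemma msum_mult_right:
  assumes "\<And>s. s \<in> S \<Longrightarrow> f s \<in> carrier_mat d d" and "C \<in> carrier_mat d d"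
  shows "msum d S (\<lambda>s. f s * C) = msum d S f * C"
proof (rule eq_matI)
  fix i j assume "i < dim_row (msum d S f * C)" and "j < dim_col (msum d S f * C)"
  then have i: "i < d" and j: "j < d" using assms by auto
  have "msum d S (\<lambda>s. f s * C) $$ (i, j) = (\<Sum>s\<in>S. \<Sum>k<d. f s $$ (i, k) * C $$ (k, j))"
    using i j assms by (auto intro!: sum.cong simp: index_mult_mat_sum)
  also have "\<dots> = (\<Sum>k<d. (\<Sum>s\<in>S. f s $$ (i, k)) * C $$ (k, j))"
    by (subst sum.swap) (simp add: sum_distrib_right)
  also have "\<dots> = (msum d S f * C) $$ (i, j)"
    using i j assms by (simp add: index_mult_mat_sum[OF msum_carrier_mat] del: index_mult_mat)
  finally show "msum d S (\<lambda>s. f s * C) $$ (i, j) = (msum d S f * C) $$ (i, j)" .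
qed (use assms in auto)

lemma msum_mult_left:
  assumes "\<And>s. s \<in> S \<Longrightarrow> f s \<in> carrier_mat d d" and "C \<in> carrier_mat d d"
  shows "msum d S (\<lambda>s. C * f s) = C * msum d S f"
proof (rule eq_matI)
  fix i j assume "i < dim_row (C * msum d S f)" and "j < dim_col (C * msum d S f)"
  then have i: "i < d" and j: "j < d" using assms by auto
  have "msum d S (\<lambda>s. C * f s) $$ (i, j) = (\<Sum>s\<in>S. \<Sum>k<d. C $$ (i, k) * f s $$ (k, j))"
    using i j assms by (auto intro!: sum.cong simp: index_mult_mat_sum)
  also have "\<dots> = (\<Sum>k<d. C $$ (i, k) * (\<Sum>s\<in>S. f s $$ (k, j)))"
    by (subst sum.swap) (simp add: sum_distrib_left)
  also have "\<dots> = (C * msum d S f) $$ (i, j)"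
    using i j assms by (simp add: index_mult_mat_sum[OF _ msum_carrier_mat] del: index_mult_mat)
  finally show "msum d S (\<lambda>s. C * f s) $$ (i, j) = (C * msum d S f) $$ (i, j)" .
qed (use assms in auto)

lemma mtrace_msum:
  assumes "\<And>s. s \<in> S \<Longrightarrow> f s \<in> carrier_mat d d"
  shows "mtrace (msum d S f) = (\<Sum>s\<in>S. mtrace (f s))"
proof -
  have "mtrace (msum d S f) = (\<Sum>i<d. \<Sum>s\<in>S. f s $$ (i, i))"
    by (simp add: mtrace_def)
  also have "\<dots> = (\<Sum>s\<in>S. \<Sum>i<d. f s $$ (i, i))"
    by (rule sum.swap)
  also have "\<dots> = (\<Sum>s\<in>S. mtrace (f s))"
    using assms by (intro sum.cong) (auto simp: mtrace_def)
  finally show ?thesis .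
qed

lemma msum_PiE_insert:
  assumes "x \<notin> S"
  shows "msum d (PiE (insert x S) B) F = msum d (PiE S B) (\<lambda>g. msum d (B x) (\<lambda>y. F (g(x := y))))"
proof -
  have "msum d (PiE (insert x S) B) F = msum d (B x \<times> PiE S B) (F \<circ> (\<lambda>(y, g). g(x := y)))"
    unfolding PiE_insert_eq by (rule msum_reindex[OF inj_combinator[OF assms]])
  also have "\<dots> = msum d (B x) (\<lambda>y. msum d (PiE S B) (\<lambda>g. F (g(x := y))))"
    by (simp add: msum_cartesian_product)
  also have "\<dots> = msum d (PiE S B) (\<lambda>g. msum d (B x) (\<lambda>y. F (g(x := y))))"
    by (rule msum_swap)
  finally show ?thesis .
qed

lemma msum_PiE_singleton:
  "msum d (PiE {x} B) F = msum d (B x) (\<lambda>y. F ((\<lambda>_. undefined)(x := y)))"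
  using msum_PiE_insert[of x "{}" d B F] by (simp add: msum_singleton)

lemma lin_map_carrier: "lin_map d d' E \<Longrightarrow> X \<in> carrier_mat d d \<Longrightarrow> E X \<in> carrier_mat d' d'"
  unfolding lin_map_def by blast

lemma lin_map_smult:
  assumes E: "lin_map d d' E" and X: "X \<in> carrier_mat d d"
  shows "E (a \<cdot>\<^sub>m X) = a \<cdot>\<^sub>m E X"
proof -
  have "E (a \<cdot>\<^sub>m X) = E (a \<cdot>\<^sub>m X + 0 \<cdot>\<^sub>m X)"
    using X by (intro arg_cong[where f = E] eq_matI) auto
  also have "\<dots> = a \<cdot>\<^sub>m E X + 0 \<cdot>\<^sub>m E X"
    using E X unfolding lin_map_def by blast
  also have "\<dots> = a \<cdot>\<^sub>m E X"
    using lin_map_carrier[OF E X] by (intro eq_matI) auto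
  finally show ?thesis .
qed

lemma lin_map_msum:
  assumes E: "lin_map d d' E" and "finite S" and "\<And>s. s \<in> S \<Longrightarrow> f s \<in> carrier_mat d d"
  shows "E (msum d S f) = msum d' S (\<lambda>s. E (f s))"
  using assms(2,3)
proof (induction S rule: finite_induct)
  case empty
  have "E (msum d {} f) = E (0 \<cdot>\<^sub>m msum d {} f + 0 \<cdot>\<^sub>m msum d {} f)"
    by (intro arg_cong[where f = E] eq_matI) auto
  also have "\<dots> = 0 \<cdot>\<^sub>m E (msum d {} f) + 0 \<cdot>\<^sub>m E (msum d {} f)"
    using E msum_carrier_mat[of d "{}" f] unfolding lin_map_def by blast
  also have "\<dots> = msum d' {} (\<lambda>s. E (f s))"
    using lin_map_carrier[OF E msum_carrier_mat[of d "{}" f]] by (intro eq_matI) auto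
  finally show ?case .
next
  case (insert x S)
  have split: "msum e (insert x S) g = 1 \<cdot>\<^sub>m msum e S g + 1 \<cdot>\<^sub>m g x"
    if "g x \<in> carrier_mat e e" for e g
    using insert.hyps that by (intro eq_matI) auto
  have fx: "f x \<in> carrier_mat d d" using insert.prems by simp
  have "E (msum d (insert x S) f) = E (1 \<cdot>\<^sub>m msum d S f + 1 \<cdot>\<^sub>m f x)"
    using split[of f d] fx by simp
  also have "\<dots> = 1 \<cdot>\<^sub>m E (msum d S f) + 1 \<cdot>\<^sub>m E (f x)"
    using E fx unfolding lin_map_def by (meson msum_carrier_mat)
  also have "\<dots> = msum d' (insert x S) (\<lambda>s. E (f s))"
    using insert split[of "\<lambda>s. E (f s)" d'] lin_map_carrier[OF E fx] by simp
  finally show ?case .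
qed

lemma munit_expansion:
  assumes "X \<in> carrier_mat d d"
  shows "X = msum d ({..<d} \<times> {..<d}) (\<lambda>(i, j). X $$ (i, j) \<cdot>\<^sub>m munit d i j)"
proof (rule eq_matI)
  fix r c assume "r < dim_row (msum d ({..<d} \<times> {..<d}) (\<lambda>(i, j). X $$ (i, j) \<cdot>\<^sub>m munit d i j))"
    and "c < dim_col (msum d ({..<d} \<times> {..<d}) (\<lambda>(i, j). X $$ (i, j) \<cdot>\<^sub>m munit d i j))"
  then have r: "r < d" and c: "c < d" by auto
  have "msum d ({..<d} \<times> {..<d}) (\<lambda>(i, j). X $$ (i, j) \<cdot>\<^sub>m munit d i j) $$ (r, c)
      = (\<Sum>p\<in>{..<d} \<times> {..<d}. if p = (r, c) then X $$ (r, c) else 0)"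
    using r c by (intro trans[OF index_msum sum.cong]) (auto simp: munit_def split: if_splits)
  also have "\<dots> = X $$ (r, c)"
    using r c by (simp add: sum.delta)
  finally show "X $$ (r, c) = msum d ({..<d} \<times> {..<d}) (\<lambda>(i, j). X $$ (i, j) \<cdot>\<^sub>m munit d i j) $$ (r, c)"
    by simp
qed (use assms in auto)

lemma lin_map_index:
  assumes E: "lin_map d d' E" and X: "X \<in> carrier_mat d d" and "p < d'" and "q < d'"
  shows "E X $$ (p, q) = (\<Sum>i<d. \<Sum>j<d. X $$ (i, j) * E (munit d i j) $$ (p, q))"
proof -
  have munit: "E (munit d i j) \<in> carrier_mat d' d'" for i j
    by (rule lin_map_carrier[OF E]) (simp add: munit_def)
  have "E X = msum d' ({..<d} \<times> {..<d}) (\<lambda>(i, j). E (X $$ (i, j) \<cdot>\<^sub>m munit d i j))"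
    by (subst munit_expansion[OF X], subst lin_map_msum[OF E])
       (auto simp: munit_def intro!: msum_cong)
  also have "\<dots> = msum d' ({..<d} \<times> {..<d}) (\<lambda>(i, j). X $$ (i, j) \<cdot>\<^sub>m E (munit d i j))"
    by (intro msum_cong) (auto simp: lin_map_smult[OF E] munit_def)
  finally have "E X $$ (p, q) = (\<Sum>(i, j)\<in>{..<d} \<times> {..<d}. X $$ (i, j) * E (munit d i j) $$ (p, q))"
    using assms munit[THEN carrier_matD(1)] munit[THEN carrier_matD(2)] by (auto intro!: sum.cong)
  then show ?thesis
    by (simp add: sum.cartesian_product)
qed

lemma lin_map_tensor_map: "lin_map (d1 * d2) (d1' * d2') (tensor_map d1 d2 d1' d2' E1 E2)"
proof -
  let ?T = "tensor_map d1 d2 d1' d2' E1 E2"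
  have carrier: "?T Z \<in> carrier_mat (d1' * d2') (d1' * d2')" for Z
    by (simp add: tensor_map_def)
  have "?T (a \<cdot>\<^sub>m X + b \<cdot>\<^sub>m Y) $$ (r, c) = (a \<cdot>\<^sub>m ?T X + b \<cdot>\<^sub>m ?T Y) $$ (r, c)"
    if X: "X \<in> carrier_mat (d1 * d2) (d1 * d2)" and Y: "Y \<in> carrier_mat (d1 * d2) (d1 * d2)"
      and r: "r < d1' * d2'" and c: "c < d1' * d2'" for X Y a b r c
  proof -
    let ?K = "\<lambda>i j k l. kron (E1 (munit d1 i j)) (E2 (munit d2 k l)) $$ (r, c)"
    have T: "?T Z $$ (r, c)
        = (\<Sum>i<d1. \<Sum>j<d1. \<Sum>k<d2. \<Sum>l<d2. Z $$ (i * d2 + k, j * d2 + l) * ?K i j k l)" for Z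
      using r c by (simp add: tensor_map_def)
    have "?T (a \<cdot>\<^sub>m X + b \<cdot>\<^sub>m Y) $$ (r, c)
        = (\<Sum>i<d1. \<Sum>j<d1. \<Sum>k<d2. \<Sum>l<d2. a * (X $$ (i * d2 + k, j * d2 + l) * ?K i j k l)
                                         + b * (Y $$ (i * d2 + k, j * d2 + l) * ?K i j k l))"
      unfolding T using X Y by (intro sum.cong refl) (simp add: add_mult_less_mult distrib_right mult.assoc)
    also have "\<dots> = a * ?T X $$ (r, c) + b * ?T Y $$ (r, c)"
      unfolding T by (simp only: sum.distrib sum_distrib_left)
    also have "\<dots> = (a \<cdot>\<^sub>m ?T X + b \<cdot>\<^sub>m ?T Y) $$ (r, c)"
      using r c carrier[of X] carrier[of Y] by simp
    finally show ?thesis .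
  qed
  then show ?thesis
    unfolding lin_map_def using carrier by (auto intro!: eq_matI simp: carrier[THEN carrier_matD(1)]
        carrier[THEN carrier_matD(2)])
qed

lemma tensor_map_kron:
  assumes E1: "lin_map d1 d1' E1" and E2: "lin_map d2 d2' E2"
    and X: "X \<in> carrier_mat d1 d1" and Y: "Y \<in> carrier_mat d2 d2"
  shows "tensor_map d1 d2 d1' d2' E1 E2 (kron X Y) = kron (E1 X) (E2 Y)"
proof (rule eq_matI)
  fix r c assume "r < dim_row (kron (E1 X) (E2 Y))" and "c < dim_col (kron (E1 X) (E2 Y))"
  then have r: "r < d1' * d2'" and c: "c < d1' * d2'"
    using lin_map_carrier[OF E1 X] lin_map_carrier[OF E2 Y] by auto
  have munit1: "E1 (munit d1 i j) \<in> carrier_mat d1' d1'" for i j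
    by (rule lin_map_carrier[OF E1]) (simp add: munit_def)
  have munit2: "E2 (munit d2 k l) \<in> carrier_mat d2' d2'" for k l
    by (rule lin_map_carrier[OF E2]) (simp add: munit_def)
  have entry: "kron X Y $$ (i * d2 + k, j * d2 + l) * kron (E1 (munit d1 i j)) (E2 (munit d2 k l)) $$ (r, c)
      = (X $$ (i, j) * E1 (munit d1 i j) $$ (r div d2', c div d2'))
      * (Y $$ (k, l) * E2 (munit d2 k l) $$ (r mod d2', c mod d2'))"
    if "i < d1" "j < d1" "k < d2" "l < d2" for i j k l
  proof -
    have "kron X Y $$ (i * d2 + k, j * d2 + l) = X $$ (i, j) * Y $$ (k, l)"
      using that by (simp add: index_kron[OF X Y] add_mult_less_mult)
    then show ?thesis
      by (simp add: index_kron[OF munit1 munit2 r c] mult_ac)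
  qed
  have "tensor_map d1 d2 d1' d2' E1 E2 (kron X Y) $$ (r, c)
      = (\<Sum>i<d1. \<Sum>j<d1. \<Sum>k<d2. \<Sum>l<d2.
           (X $$ (i, j) * E1 (munit d1 i j) $$ (r div d2', c div d2'))
         * (Y $$ (k, l) * E2 (munit d2 k l) $$ (r mod d2', c mod d2')))"
    using r c by (simp add: tensor_map_def entry)
  also have "\<dots> = (\<Sum>i<d1. \<Sum>j<d1. X $$ (i, j) * E1 (munit d1 i j) $$ (r div d2', c div d2')
                   * (\<Sum>k<d2. \<Sum>l<d2. Y $$ (k, l) * E2 (munit d2 k l) $$ (r mod d2', c mod d2')))"
    by (simp only: sum_distrib_left)
  also have "\<dots> = (\<Sum>i<d1. \<Sum>j<d1. X $$ (i, j) * E1 (munit d1 i j) $$ (r div d2', c div d2'))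
                 * (\<Sum>k<d2. \<Sum>l<d2. Y $$ (k, l) * E2 (munit d2 k l) $$ (r mod d2', c mod d2'))"
    by (simp only: sum_distrib_right)
  also have "\<dots> = E1 X $$ (r div d2', c div d2') * E2 Y $$ (r mod d2', c mod d2')"
    by (simp only: lin_map_index[OF E1 X less_mult_imp_div_less[OF r] less_mult_imp_div_less[OF c]]
        lin_map_index[OF E2 Y mod_less_of_less_mult[OF r] mod_less_of_less_mult[OF c]])
  also have "\<dots> = kron (E1 X) (E2 Y) $$ (r, c)"
    by (rule index_kron[OF lin_map_carrier[OF E1 X] lin_map_carrier[OF E2 Y] r c, symmetric])
  finally show "tensor_map d1 d2 d1' d2' E1 E2 (kron X Y) $$ (r, c) = kron (E1 X) (E2 Y) $$ (r, c)" .
qed (use lin_map_carrier[OF E1 X] lin_map_carrier[OF E2 Y] in \<open>simp_all add: tensor_map_def\<close>)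

definition lin_process :: "nat \<Rightarrow> (nat \<Rightarrow> nat) \<Rightarrow> complex mat \<Rightarrow> (nat \<Rightarrow> complex mat \<Rightarrow> complex mat) \<Rightarrow> bool"
  where "lin_process n d \<rho> E \<longleftrightarrow>
    \<rho> \<in> carrier_mat (d 0) (d 0) \<and> (\<forall>k<n. lin_map (d k) (d (Suc k)) (E (Suc k)))"

lemma lin_process_carrier: "lin_process n d \<rho> E \<Longrightarrow> \<rho> \<in> carrier_mat (d 0) (d 0)"
  by (simp add: lin_process_def)

lemma lin_process_lin_map: "lin_process n d \<rho> E \<Longrightarrow> k < n \<Longrightarrow> lin_map (d k) (d (Suc k)) (E (Suc k))"
  by (simp add: lin_process_def)

lemma lin_process_kron:
  assumes "lin_process n d1 \<rho>1 E1" and "lin_process n d2 \<rho>2 E2"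
  shows "lin_process n (\<lambda>k. d1 k * d2 k) (kron \<rho>1 \<rho>2) (prod_E d1 d2 E1 E2)"
  using assms by (simp add: lin_process_def prod_E_def lin_map_tensor_map)

fun evolve_st :: "complex mat \<Rightarrow> (nat \<Rightarrow> complex mat \<Rightarrow> complex mat) \<Rightarrow> nat \<Rightarrow> complex mat" where
  "evolve_st \<rho> E 0 = \<rho>"
| "evolve_st \<rho> E (Suc k) = E (Suc k) (evolve_st \<rho> E k)"

lemma evolve_st_carrier:
  assumes "lin_process n d \<rho> E"
  shows "k \<le> n \<Longrightarrow> evolve_st \<rho> E k \<in> carrier_mat (d k) (d k)"
  by (induction k)
     (simp_all add: lin_process_carrier[OF assms] lin_map_carrier[OF lin_process_lin_map[OF assms]])

text \<open>Common form of the three Kirkwood-Dirac recursions: the projectors are already evaluated at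
  the outcomes, and an identity stands on a side where nothing is measured.\<close>

fun sandwich_st :: "complex mat \<Rightarrow> (nat \<Rightarrow> complex mat \<Rightarrow> complex mat)
    \<Rightarrow> (nat \<Rightarrow> complex mat) \<Rightarrow> (nat \<Rightarrow> complex mat) \<Rightarrow> nat \<Rightarrow> complex mat" where
  "sandwich_st \<rho> E L R 0 = L 0 * \<rho> * R 0"
| "sandwich_st \<rho> E L R (Suc k) = L (Suc k) * E (Suc k) (sandwich_st \<rho> E L R k) * R (Suc k)"

lemma sandwich_st_cong:
  "(\<And>i. i \<le> k \<Longrightarrow> L i = L' i) \<Longrightarrow> (\<And>i. i \<le> k \<Longrightarrow> R i = R' i) \<Longrightarrow>
    sandwich_st \<rho> E L R k = sandwich_st \<rho> E L' R' k"
  by (induction k) auto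

lemma sandwich_st_carrier:
  assumes pr: "lin_process n d \<rho> E" and "k \<le> n"
    and L: "\<And>i. i \<le> k \<Longrightarrow> L i \<in> carrier_mat (d i) (d i)"
    and R: "\<And>i. i \<le> k \<Longrightarrow> R i \<in> carrier_mat (d i) (d i)"
  shows "sandwich_st \<rho> E L R k \<in> carrier_mat (d k) (d k)"
  using assms(2-)
proof (induction k)
  case 0
  show ?case
    using mult_carrier_mat[OF mult_carrier_mat[OF 0(2)[of 0] lin_process_carrier[OF pr]] 0(3)[of 0]] by simp
next
  case (Suc k)
  then have "sandwich_st \<rho> E L R k \<in> carrier_mat (d k) (d k)" by simp
  moreover have "k < n" using Suc.prems(1) by simp
  ultimately have "E (Suc k) (sandwich_st \<rho> E L R k) \<in> carrier_mat (d (Suc k)) (d (Suc k))"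
    by (rule lin_map_carrier[OF lin_process_lin_map[OF pr], rotated])
  then show ?case
    using mult_carrier_mat[OF mult_carrier_mat[OF Suc.prems(2)[OF order.refl]] Suc.prems(3)[OF order.refl]]
    by simp
qed

lemma kd_both_st_eq_sandwich_st:
  "kd_both_st \<rho> E P a b k = sandwich_st \<rho> E (\<lambda>i. P i (a i)) (\<lambda>i. P i (b i)) k"
  by (induction k) auto

lemma kd_right_st_eq_sandwich_st:
  assumes pr: "lin_process n d \<rho> E" and "k \<le> n"
    and P: "\<And>i. i \<le> k \<Longrightarrow> P i (b i) \<in> carrier_mat (d i) (d i)"
  shows "kd_right_st \<rho> E P b k = sandwich_st \<rho> E (\<lambda>i. 1\<^sub>m (d i)) (\<lambda>i. P i (b i)) k"
  using assms(2,3)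
proof (induction k)
  case 0
  then show ?case using lin_process_carrier[OF pr] by simp
next
  case (Suc k)
  have "sandwich_st \<rho> E (\<lambda>i. 1\<^sub>m (d i)) (\<lambda>i. P i (b i)) k \<in> carrier_mat (d k) (d k)"
    using Suc.prems by (intro sandwich_st_carrier[OF pr]) auto
  then have "E (Suc k) (sandwich_st \<rho> E (\<lambda>i. 1\<^sub>m (d i)) (\<lambda>i. P i (b i)) k) \<in> carrier_mat (d (Suc k)) (d (Suc k))"
    using Suc.prems by (intro lin_map_carrier[OF lin_process_lin_map[OF pr]]) auto
  then show ?case using Suc by simp
qed

lemma kd_left_st_eq_sandwich_st:
  assumes pr: "lin_process n d \<rho> E" and "k \<le> n"
    and P: "\<And>i. i \<le> k \<Longrightarrow> P i (a i) \<in> carrier_mat (d i) (d i)"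
  shows "kd_left_st \<rho> E P a k = sandwich_st \<rho> E (\<lambda>i. P i (a i)) (\<lambda>i. 1\<^sub>m (d i)) k"
  using assms(2,3)
proof (induction k)
  case 0
  then show ?case using lin_process_carrier[OF pr] by simp
next
  case (Suc k)
  have "sandwich_st \<rho> E (\<lambda>i. P i (a i)) (\<lambda>i. 1\<^sub>m (d i)) k \<in> carrier_mat (d k) (d k)"
    using Suc.prems by (intro sandwich_st_carrier[OF pr]) auto
  then have "E (Suc k) (sandwich_st \<rho> E (\<lambda>i. P i (a i)) (\<lambda>i. 1\<^sub>m (d i)) k) \<in> carrier_mat (d (Suc k)) (d (Suc k))"
    using Suc.prems by (intro lin_map_carrier[OF lin_process_lin_map[OF pr]]) auto
  then show ?case using Suc Suc.prems by simp
qed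

lemma prod_E_Suc:
  "prod_E d1 d2 E1 E2 (Suc k) = tensor_map (d1 k) (d2 k) (d1 (Suc k)) (d2 (Suc k)) (E1 (Suc k)) (E2 (Suc k))"
  by (simp add: prod_E_def)

lemma sandwich_st_kron:
  assumes p1: "lin_process n d1 \<rho>1 E1" and p2: "lin_process n d2 \<rho>2 E2"
    and L1: "\<And>i. i \<le> n \<Longrightarrow> L1 i \<in> carrier_mat (d1 i) (d1 i)"
    and R1: "\<And>i. i \<le> n \<Longrightarrow> R1 i \<in> carrier_mat (d1 i) (d1 i)"
    and L2: "\<And>i. i \<le> n \<Longrightarrow> L2 i \<in> carrier_mat (d2 i) (d2 i)"
    and R2: "\<And>i. i \<le> n \<Longrightarrow> R2 i \<in> carrier_mat (d2 i) (d2 i)"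
    and "k \<le> n"
  shows "sandwich_st (kron \<rho>1 \<rho>2) (prod_E d1 d2 E1 E2) (\<lambda>i. kron (L1 i) (L2 i)) (\<lambda>i. kron (R1 i) (R2 i)) k
       = kron (sandwich_st \<rho>1 E1 L1 R1 k) (sandwich_st \<rho>2 E2 L2 R2 k)"
  using \<open>k \<le> n\<close>
proof (induction k)
  case 0
  show ?case
    using kron_mult_kron3[OF L1 lin_process_carrier[OF p1] R1 L2 lin_process_carrier[OF p2] R2] by simp
next
  case (Suc k)
  let ?S1 = "sandwich_st \<rho>1 E1 L1 R1 k" and ?S2 = "sandwich_st \<rho>2 E2 L2 R2 k"
  have k: "k < n" using Suc.prems by simp
  note lin1 = lin_process_lin_map[OF p1 k] and lin2 = lin_process_lin_map[OF p2 k]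
  have S1: "?S1 \<in> carrier_mat (d1 k) (d1 k)" and S2: "?S2 \<in> carrier_mat (d2 k) (d2 k)"
    using k L1 R1 L2 R2 by (auto intro!: sandwich_st_carrier[OF p1] sandwich_st_carrier[OF p2])
  have "sandwich_st (kron \<rho>1 \<rho>2) (prod_E d1 d2 E1 E2) (\<lambda>i. kron (L1 i) (L2 i)) (\<lambda>i. kron (R1 i) (R2 i)) (Suc k)
      = kron (L1 (Suc k)) (L2 (Suc k)) * kron (E1 (Suc k) ?S1) (E2 (Suc k) ?S2) * kron (R1 (Suc k)) (R2 (Suc k))"
    using Suc by (simp add: prod_E_Suc tensor_map_kron[OF lin1 lin2 S1 S2])
  also have "\<dots> = kron (L1 (Suc k) * E1 (Suc k) ?S1 * R1 (Suc k)) (L2 (Suc k) * E2 (Suc k) ?S2 * R2 (Suc k))"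
    by (rule kron_mult_kron3[OF L1[OF Suc.prems] lin_map_carrier[OF lin1 S1] R1[OF Suc.prems]
          L2[OF Suc.prems] lin_map_carrier[OF lin2 S2] R2[OF Suc.prems]])
  finally show ?case by simp
qed

lemma mtrace_sandwich_st_kron:
  assumes p1: "lin_process n d1 \<rho>1 E1" and p2: "lin_process n d2 \<rho>2 E2"
    and L1: "\<And>i. i \<le> n \<Longrightarrow> L1 i \<in> carrier_mat (d1 i) (d1 i)"
    and R1: "\<And>i. i \<le> n \<Longrightarrow> R1 i \<in> carrier_mat (d1 i) (d1 i)"
    and L2: "\<And>i. i \<le> n \<Longrightarrow> L2 i \<in> carrier_mat (d2 i) (d2 i)"
    and R2: "\<And>i. i \<le> n \<Longrightarrow> R2 i \<in> carrier_mat (d2 i) (d2 i)"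
  shows "mtrace (sandwich_st (kron \<rho>1 \<rho>2) (prod_E d1 d2 E1 E2) (\<lambda>i. kron (L1 i) (L2 i)) (\<lambda>i. kron (R1 i) (R2 i)) n)
       = mtrace (sandwich_st \<rho>1 E1 L1 R1 n) * mtrace (sandwich_st \<rho>2 E2 L2 R2 n)"
proof -
  have S1: "sandwich_st \<rho>1 E1 L1 R1 n \<in> carrier_mat (d1 n) (d1 n)"
    by (rule sandwich_st_carrier[OF p1 order.refl L1 R1])
  have S2: "sandwich_st \<rho>2 E2 L2 R2 n \<in> carrier_mat (d2 n) (d2 n)"
    by (rule sandwich_st_carrier[OF p2 order.refl L2 R2])
  show ?thesis
    using sandwich_st_kron[OF p1 p2 L1 R1 L2 R2 order.refl] mtrace_kron[OF S1 S2] by simp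
qed

lemma msum_sandwich_identity:
  assumes L: "\<And>y. y \<in> Y \<Longrightarrow> L y \<in> carrier_mat d d" and "msum d Y L = 1\<^sub>m d"
    and R: "\<And>z. z \<in> Z \<Longrightarrow> R z \<in> carrier_mat d d" and "msum d Z R = 1\<^sub>m d"
    and M: "M \<in> carrier_mat d d"
  shows "msum d Y (\<lambda>y. msum d Z (\<lambda>z. L y * M * R z)) = M"
proof -
  have LM: "L y * M \<in> carrier_mat d d" if "y \<in> Y" for y
    using mult_carrier_mat[OF L[OF that] M] .
  have "msum d Y (\<lambda>y. msum d Z (\<lambda>z. L y * M * R z)) = msum d Y (\<lambda>y. L y * M * msum d Z R)"
    using LM R by (intro msum_cong msum_mult_left)
  also have "\<dots> = msum d Y (\<lambda>y. L y * M)"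
    unfolding \<open>msum d Z R = 1\<^sub>m d\<close> by (intro msum_cong right_mult_one_mat[where nr = d] LM)
  also have "\<dots> = msum d Y L * M"
    by (rule msum_mult_right[OF L M])
  finally show ?thesis
    using \<open>msum d Y L = 1\<^sub>m d\<close> M by simp
qed

lemma msum_const_PiE_singleton:
  assumes "M \<in> carrier_mat d d"
  shows "msum d (PiE I (\<lambda>_. {x})) (\<lambda>_. M) = M"
proof -
  have "PiE I (\<lambda>_. {x}) = {\<lambda>i\<in>I. x}"
    by (simp add: PiE_eq_singleton)
  then show ?thesis using assms by (simp add: msum_singleton)
qed

lemma msum_sandwich_st:
  assumes pr: "lin_process n d \<rho> E" and "k \<le> n"
    and A: "\<And>i. i \<le> n \<Longrightarrow> finite (A i)" "\<And>i a. i \<le> n \<Longrightarrow> a \<in> A i \<Longrightarrow> L i a \<in> carrier_mat (d i) (d i)"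
      "\<And>i. i \<le> n \<Longrightarrow> msum (d i) (A i) (L i) = 1\<^sub>m (d i)"
    and C: "\<And>i. i \<le> n \<Longrightarrow> finite (C i)" "\<And>i c. i \<le> n \<Longrightarrow> c \<in> C i \<Longrightarrow> R i c \<in> carrier_mat (d i) (d i)"
      "\<And>i. i \<le> n \<Longrightarrow> msum (d i) (C i) (R i) = 1\<^sub>m (d i)"
  shows "msum (d k) (PiE {..k} A) (\<lambda>a. msum (d k) (PiE {..k} C) (\<lambda>c.
           sandwich_st \<rho> E (\<lambda>i. L i (a i)) (\<lambda>i. R i (c i)) k)) = evolve_st \<rho> E k"
  using \<open>k \<le> n\<close>
proof (induction k)
  case 0
  have "msum (d 0) (A 0) (\<lambda>y. msum (d 0) (C 0) (\<lambda>z. L 0 y * \<rho> * R 0 z)) = \<rho>"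
    using A C lin_process_carrier[OF pr] by (intro msum_sandwich_identity) auto
  then show ?case by (simp add: msum_PiE_singleton)
next
  case (Suc k)
  let ?D = "d (Suc k)" and ?S = "\<lambda>a c. sandwich_st \<rho> E (\<lambda>i. L i (a i)) (\<lambda>i. R i (c i)) k"
  have k: "k < n" using Suc.prems by simp
  note lin = lin_process_lin_map[OF pr k]
  have fin: "finite (PiE {..k} A)" "finite (PiE {..k} C)"
    using A(1) C(1) k by (auto intro!: finite_PiE)
  have S: "?S a c \<in> carrier_mat (d k) (d k)" if "a \<in> PiE {..k} A" and "c \<in> PiE {..k} C" for a c
    using that k by (intro sandwich_st_carrier[OF pr]) (auto intro: A(2) C(2))
  have upd: "sandwich_st \<rho> E (\<lambda>i. L i ((a(Suc k := y)) i)) (\<lambda>i. R i ((c(Suc k := z)) i)) k = ?S a c"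
    for a c y z
    by (rule sandwich_st_cong) auto
  have notin: "Suc k \<notin> {..k}" by simp
  have "msum ?D (PiE {..Suc k} A) (\<lambda>a. msum ?D (PiE {..Suc k} C) (\<lambda>c.
          sandwich_st \<rho> E (\<lambda>i. L i (a i)) (\<lambda>i. R i (c i)) (Suc k)))
      = msum ?D (PiE {..k} A) (\<lambda>a. msum ?D (A (Suc k)) (\<lambda>y. msum ?D (PiE {..k} C) (\<lambda>c.
          msum ?D (C (Suc k)) (\<lambda>z. L (Suc k) y * E (Suc k) (?S a c) * R (Suc k) z))))"
    by (simp only: atMost_Suc msum_PiE_insert[OF notin] sandwich_st.simps fun_upd_same upd)
  also have "\<dots> = msum ?D (PiE {..k} A) (\<lambda>a. msum ?D (PiE {..k} C) (\<lambda>c. msum ?D (A (Suc k)) (\<lambda>y.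
          msum ?D (C (Suc k)) (\<lambda>z. L (Suc k) y * E (Suc k) (?S a c) * R (Suc k) z))))"
    by (intro msum_cong) (rule msum_swap)
  also have "\<dots> = msum ?D (PiE {..k} A) (\<lambda>a. msum ?D (PiE {..k} C) (\<lambda>c. E (Suc k) (?S a c)))"
    using A C Suc.prems S by (intro msum_cong msum_sandwich_identity lin_map_carrier[OF lin]) auto
  also have "\<dots> = E (Suc k) (msum (d k) (PiE {..k} A) (\<lambda>a. msum (d k) (PiE {..k} C) (?S a)))"
    using S fin by (simp add: lin_map_msum[OF lin] cong: msum_cong)
  also have "\<dots> = evolve_st \<rho> E (Suc k)"
    using Suc.IH k by simp
  finally show ?case .
qed

text \<open>A side where nothing is measured is the one-outcome measurement \<open>{1}\<close>.\<close>

lemma msum_sandwich_st_right: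
  assumes pr: "lin_process n d \<rho> E"
    and "\<And>i. i \<le> n \<Longrightarrow> finite (C i)" "\<And>i c. i \<le> n \<Longrightarrow> c \<in> C i \<Longrightarrow> R i c \<in> carrier_mat (d i) (d i)"
      "\<And>i. i \<le> n \<Longrightarrow> msum (d i) (C i) (R i) = 1\<^sub>m (d i)"
  shows "msum (d n) (PiE {..n} C) (\<lambda>c. sandwich_st \<rho> E (\<lambda>i. 1\<^sub>m (d i)) (\<lambda>i. R i (c i)) n)
       = evolve_st \<rho> E n"
proof -
  have "msum (d n) (PiE {..n} C) (\<lambda>c. sandwich_st \<rho> E (\<lambda>i. 1\<^sub>m (d i)) (\<lambda>i. R i (c i)) n)
      = msum (d n) (PiE {..n} (\<lambda>_. {()})) (\<lambda>a. msum (d n) (PiE {..n} C) (\<lambda>c.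
          sandwich_st \<rho> E (\<lambda>i. 1\<^sub>m (d i)) (\<lambda>i. R i (c i)) n))"
    by (rule msum_const_PiE_singleton[symmetric]) simp
  also have "\<dots> = evolve_st \<rho> E n"
    using assms by (intro msum_sandwich_st[where L = "\<lambda>i _. 1\<^sub>m (d i)"]) (auto simp: msum_singleton)
  finally show ?thesis .
qed

lemma msum_sandwich_st_left:
  assumes pr: "lin_process n d \<rho> E"
    and "\<And>i. i \<le> n \<Longrightarrow> finite (A i)" "\<And>i a. i \<le> n \<Longrightarrow> a \<in> A i \<Longrightarrow> L i a \<in> carrier_mat (d i) (d i)"
      "\<And>i. i \<le> n \<Longrightarrow> msum (d i) (A i) (L i) = 1\<^sub>m (d i)"
  shows "msum (d n) (PiE {..n} A) (\<lambda>a. sandwich_st \<rho> E (\<lambda>i. L i (a i)) (\<lambda>i. 1\<^sub>m (d i)) n)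
       = evolve_st \<rho> E n"
proof -
  have "msum (d n) (PiE {..n} A) (\<lambda>a. sandwich_st \<rho> E (\<lambda>i. L i (a i)) (\<lambda>i. 1\<^sub>m (d i)) n)
      = msum (d n) (PiE {..n} A) (\<lambda>a. msum (d n) (PiE {..n} (\<lambda>_. {()})) (\<lambda>c.
          sandwich_st \<rho> E (\<lambda>i. L i (a i)) (\<lambda>i. 1\<^sub>m (d i)) n))"
    using assms(3)
    by (intro msum_cong msum_const_PiE_singleton[symmetric] sandwich_st_carrier[OF pr]) auto
  also have "\<dots> = evolve_st \<rho> E n"
    using assms by (intro msum_sandwich_st[where R = "\<lambda>i _. 1\<^sub>m (d i)"]) (auto simp: msum_singleton)
  finally show ?thesis .
qed

section \<open>Normalization of the Kirkwood-Dirac distributions\<close>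

lemma mt_process_cptp:
  assumes "mt_process n d \<rho> E B P" and "k < n"
  shows "cptp (d k) (d (Suc k)) (E (Suc k))"
proof -
  have "Suc k \<in> {1..n}" using assms(2) by simp
  then have "cptp (d (Suc k - 1)) (d (Suc k)) (E (Suc k))"
    using assms(1) unfolding mt_process_def by blast
  then show ?thesis by simp
qed

lemma mt_process_lin_process:
  assumes "mt_process n d \<rho> E B P"
  shows "lin_process n d \<rho> E"
proof -
  have "\<rho> \<in> carrier_mat (d 0) (d 0)"
    using assms by (simp add: mt_process_def density_def psd_def)
  moreover have "\<forall>k<n. lin_map (d k) (d (Suc k)) (E (Suc k))"
    using mt_process_cptp[OF assms] by (simp add: cptp_def)
  ultimately show ?thesis by (simp add: lin_process_def)
qed

lemma mtrace_evolve_st: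
  assumes m: "mt_process n d \<rho> E B P"
  shows "k \<le> n \<Longrightarrow> mtrace (evolve_st \<rho> E k) = 1"
proof (induction k)
  case 0
  then show ?case using m by (simp add: mt_process_def density_def)
next
  case (Suc k)
  then have "evolve_st \<rho> E k \<in> carrier_mat (d k) (d k)"
    using evolve_st_carrier[OF mt_process_lin_process[OF m]] by simp
  then show ?case using Suc mt_process_cptp[OF m, of k] by (simp add: cptp_def)
qed

lemma mt_process_projectors:
  assumes "mt_process n d \<rho> E B P" and "k \<le> n"
  shows "finite (B k)" and "\<And>b. b \<in> B k \<Longrightarrow> P k b \<in> carrier_mat (d k) (d k)"
    and "msum (d k) (B k) (P k) = 1\<^sub>m (d k)"
  using assms unfolding mt_process_def proj_family_def msum_def by auto

lemma outcome_projector_carrier: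
  "mt_process n d \<rho> E B P \<Longrightarrow> b \<in> outcomes n B \<Longrightarrow> i \<le> n \<Longrightarrow> P i (b i) \<in> carrier_mat (d i) (d i)"
  by (auto simp: outcomes_def intro: mt_process_projectors(2))

lemma sum_QKD_right:
  assumes m: "mt_process n d \<rho> E B P"
  shows "(\<Sum>b\<in>outcomes n B. QKD_right n \<rho> E P b) = 1"
proof -
  note pr = mt_process_lin_process[OF m] and P = outcome_projector_carrier[OF m]
  let ?S = "\<lambda>b. sandwich_st \<rho> E (\<lambda>i. 1\<^sub>m (d i)) (\<lambda>i. P i (b i)) n"
  have "(\<Sum>b\<in>outcomes n B. QKD_right n \<rho> E P b) = (\<Sum>b\<in>outcomes n B. mtrace (?S b))"
    unfolding QKD_right_def using P by (intro sum.cong) (simp_all add: kd_right_st_eq_sandwich_st[OF pr])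
  also have "\<dots> = mtrace (msum (d n) (outcomes n B) ?S)"
    using P by (intro mtrace_msum[symmetric] sandwich_st_carrier[OF pr]) auto
  also have "\<dots> = 1"
    unfolding outcomes_def using mt_process_projectors[OF m]
    by (simp add: msum_sandwich_st_right[OF pr] mtrace_evolve_st[OF m])
  finally show ?thesis .
qed

lemma sum_QKD_left:
  assumes m: "mt_process n d \<rho> E B P"
  shows "(\<Sum>a\<in>outcomes n B. QKD_left n \<rho> E P a) = 1"
proof -
  note pr = mt_process_lin_process[OF m] and P = outcome_projector_carrier[OF m]
  let ?S = "\<lambda>a. sandwich_st \<rho> E (\<lambda>i. P i (a i)) (\<lambda>i. 1\<^sub>m (d i)) n"
  have "(\<Sum>a\<in>outcomes n B. QKD_left n \<rho> E P a) = (\<Sum>a\<in>outcomes n B. mtrace (?S a))"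
    unfolding QKD_left_def using P by (intro sum.cong) (simp_all add: kd_left_st_eq_sandwich_st[OF pr])
  also have "\<dots> = mtrace (msum (d n) (outcomes n B) ?S)"
    using P by (intro mtrace_msum[symmetric] sandwich_st_carrier[OF pr]) auto
  also have "\<dots> = 1"
    unfolding outcomes_def using mt_process_projectors[OF m]
    by (simp add: msum_sandwich_st_left[OF pr] mtrace_evolve_st[OF m])
  finally show ?thesis .
qed

lemma sum_QKD_both:
  assumes m: "mt_process n d \<rho> E B P"
  shows "(\<Sum>ab\<in>outcomes n B \<times> outcomes n B. QKD_both n \<rho> E P ab) = 1"
proof -
  note pr = mt_process_lin_process[OF m] and P = outcome_projector_carrier[OF m]
  let ?S = "\<lambda>a b. sandwich_st \<rho> E (\<lambda>i. P i (a i)) (\<lambda>i. P i (b i)) n"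
  have S: "?S a b \<in> carrier_mat (d n) (d n)" if "a \<in> outcomes n B" and "b \<in> outcomes n B" for a b
    using that P by (intro sandwich_st_carrier[OF pr]) auto
  have "(\<Sum>ab\<in>outcomes n B \<times> outcomes n B. QKD_both n \<rho> E P ab)
      = (\<Sum>a\<in>outcomes n B. \<Sum>b\<in>outcomes n B. mtrace (?S a b))"
    by (simp add: QKD_both_def kd_both_st_eq_sandwich_st sum.cartesian_product')
  also have "\<dots> = mtrace (msum (d n) (outcomes n B) (\<lambda>a. msum (d n) (outcomes n B) (?S a)))"
    using S by (simp add: mtrace_msum)
  also have "\<dots> = 1"
    unfolding outcomes_def using mt_process_projectors[OF m]
    by (simp add: msum_sandwich_st[OF pr order.refl] mtrace_evolve_st[OF m])
  finally show ?thesis .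
qed

section \<open>Factorization over product processes\<close>

definition pair_outcomes :: "nat \<Rightarrow> (nat \<Rightarrow> 'b) \<Rightarrow> (nat \<Rightarrow> 'c) \<Rightarrow> nat \<Rightarrow> 'b \<times> 'c" where
  "pair_outcomes n x y = (\<lambda>k\<in>{..n}. (x k, y k))"

lemma prod_P_pair_outcomes:
  "i \<le> n \<Longrightarrow> prod_P P1 P2 i (pair_outcomes n x y i) = kron (P1 i (x i)) (P2 i (y i))"
  by (simp add: prod_P_def pair_outcomes_def)

lemma bij_betw_pair_outcomes:
  "bij_betw (\<lambda>(x, y). pair_outcomes n x y) (outcomes n B1 \<times> outcomes n B2) (outcomes n (prod_B B1 B2))"
  by (rule bij_betw_byWitness[where f' = "\<lambda>z. (\<lambda>k\<in>{..n}. fst (z k), \<lambda>k\<in>{..n}. snd (z k))"])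
     (auto simp: pair_outcomes_def outcomes_def prod_B_def PiE_iff extensional_def fun_eq_iff mem_Times_iff)

lemma bij_betw_pair_outcomes_pairs:
  "bij_betw (\<lambda>(p, q). (pair_outcomes n (fst p) (fst q), pair_outcomes n (snd p) (snd q)))
     ((outcomes n B1 \<times> outcomes n B1) \<times> (outcomes n B2 \<times> outcomes n B2))
     (outcomes n (prod_B B1 B2) \<times> outcomes n (prod_B B1 B2))"
proof -
  let ?pair = "\<lambda>(x, y). pair_outcomes n x y" and ?swap = "\<lambda>(p, q). ((fst p, fst q), (snd p, snd q))"
  have "bij_betw ?swap ((outcomes n B1 \<times> outcomes n B1) \<times> (outcomes n B2 \<times> outcomes n B2))
      ((outcomes n B1 \<times> outcomes n B2) \<times> (outcomes n B1 \<times> outcomes n B2))"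
    by (rule bij_betw_byWitness[where f' = ?swap]) auto
  then have "bij_betw (map_prod ?pair ?pair \<circ> ?swap)
      ((outcomes n B1 \<times> outcomes n B1) \<times> (outcomes n B2 \<times> outcomes n B2))
      (outcomes n (prod_B B1 B2) \<times> outcomes n (prod_B B1 B2))"
    by (rule bij_betw_trans) (intro bij_betw_map_prod bij_betw_pair_outcomes)
  then show ?thesis
    by (simp add: comp_def case_prod_beta')
qed

lemma QKD_right_product:
  assumes m1: "mt_process n d1 \<rho>1 E1 B1 P1" and m2: "mt_process n d2 \<rho>2 E2 B2 P2"
    and x: "x \<in> outcomes n B1" and y: "y \<in> outcomes n B2"
  shows "QKD_right n (kron \<rho>1 \<rho>2) (prod_E d1 d2 E1 E2) (prod_P P1 P2) (pair_outcomes n x y)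
       = QKD_right n \<rho>1 E1 P1 x * QKD_right n \<rho>2 E2 P2 y"
proof -
  note pr1 = mt_process_lin_process[OF m1] and pr2 = mt_process_lin_process[OF m2]
  note P1 = outcome_projector_carrier[OF m1 x] and P2 = outcome_projector_carrier[OF m2 y]
  have "kd_right_st (kron \<rho>1 \<rho>2) (prod_E d1 d2 E1 E2) (prod_P P1 P2) (pair_outcomes n x y) n
      = sandwich_st (kron \<rho>1 \<rho>2) (prod_E d1 d2 E1 E2) (\<lambda>i. 1\<^sub>m (d1 i * d2 i))
          (\<lambda>i. prod_P P1 P2 i (pair_outcomes n x y i)) n"
    using P1 P2 by (intro kd_right_st_eq_sandwich_st[OF lin_process_kron[OF pr1 pr2]])
       (simp_all add: prod_P_pair_outcomes)
  also have "\<dots> = sandwich_st (kron \<rho>1 \<rho>2) (prod_E d1 d2 E1 E2) (\<lambda>i. kron (1\<^sub>m (d1 i)) (1\<^sub>m (d2 i)))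
          (\<lambda>i. kron (P1 i (x i)) (P2 i (y i))) n"
    by (rule sandwich_st_cong) (simp_all add: kron_one_mat prod_P_pair_outcomes)
  finally show ?thesis
    unfolding QKD_right_def using P1 P2
    by (simp add: kd_right_st_eq_sandwich_st[OF pr1] kd_right_st_eq_sandwich_st[OF pr2]
        mtrace_sandwich_st_kron[OF pr1 pr2])
qed

lemma QKD_left_product:
  assumes m1: "mt_process n d1 \<rho>1 E1 B1 P1" and m2: "mt_process n d2 \<rho>2 E2 B2 P2"
    and x: "x \<in> outcomes n B1" and y: "y \<in> outcomes n B2"
  shows "QKD_left n (kron \<rho>1 \<rho>2) (prod_E d1 d2 E1 E2) (prod_P P1 P2) (pair_outcomes n x y)
       = QKD_left n \<rho>1 E1 P1 x * QKD_left n \<rho>2 E2 P2 y"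
proof -
  note pr1 = mt_process_lin_process[OF m1] and pr2 = mt_process_lin_process[OF m2]
  note P1 = outcome_projector_carrier[OF m1 x] and P2 = outcome_projector_carrier[OF m2 y]
  have "kd_left_st (kron \<rho>1 \<rho>2) (prod_E d1 d2 E1 E2) (prod_P P1 P2) (pair_outcomes n x y) n
      = sandwich_st (kron \<rho>1 \<rho>2) (prod_E d1 d2 E1 E2) (\<lambda>i. prod_P P1 P2 i (pair_outcomes n x y i))
          (\<lambda>i. 1\<^sub>m (d1 i * d2 i)) n"
    using P1 P2 by (intro kd_left_st_eq_sandwich_st[OF lin_process_kron[OF pr1 pr2]])
       (simp_all add: prod_P_pair_outcomes)
  also have "\<dots> = sandwich_st (kron \<rho>1 \<rho>2) (prod_E d1 d2 E1 E2) (\<lambda>i. kron (P1 i (x i)) (P2 i (y i)))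
          (\<lambda>i. kron (1\<^sub>m (d1 i)) (1\<^sub>m (d2 i))) n"
    by (rule sandwich_st_cong) (simp_all add: kron_one_mat prod_P_pair_outcomes)
  finally show ?thesis
    unfolding QKD_left_def using P1 P2
    by (simp add: kd_left_st_eq_sandwich_st[OF pr1] kd_left_st_eq_sandwich_st[OF pr2]
        mtrace_sandwich_st_kron[OF pr1 pr2])
qed

lemma QKD_both_product:
  assumes m1: "mt_process n d1 \<rho>1 E1 B1 P1" and m2: "mt_process n d2 \<rho>2 E2 B2 P2"
    and p: "p \<in> outcomes n B1 \<times> outcomes n B1" and q: "q \<in> outcomes n B2 \<times> outcomes n B2"
  shows "QKD_both n (kron \<rho>1 \<rho>2) (prod_E d1 d2 E1 E2) (prod_P P1 P2)
           (pair_outcomes n (fst p) (fst q), pair_outcomes n (snd p) (snd q))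
       = QKD_both n \<rho>1 E1 P1 p * QKD_both n \<rho>2 E2 P2 q"
proof -
  obtain a1 b1 a2 b2 where pq: "p = (a1, b1)" "q = (a2, b2)" by fastforce
  note pr1 = mt_process_lin_process[OF m1] and pr2 = mt_process_lin_process[OF m2]
  have P1: "\<And>i. i \<le> n \<Longrightarrow> P1 i (a1 i) \<in> carrier_mat (d1 i) (d1 i)" "\<And>i. i \<le> n \<Longrightarrow> P1 i (b1 i) \<in> carrier_mat (d1 i) (d1 i)"
    and P2: "\<And>i. i \<le> n \<Longrightarrow> P2 i (a2 i) \<in> carrier_mat (d2 i) (d2 i)" "\<And>i. i \<le> n \<Longrightarrow> P2 i (b2 i) \<in> carrier_mat (d2 i) (d2 i)"
    using p q pq by (auto intro: outcome_projector_carrier[OF m1] outcome_projector_carrier[OF m2])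
  have "kd_both_st (kron \<rho>1 \<rho>2) (prod_E d1 d2 E1 E2) (prod_P P1 P2) (pair_outcomes n a1 a2) (pair_outcomes n b1 b2) n
      = sandwich_st (kron \<rho>1 \<rho>2) (prod_E d1 d2 E1 E2) (\<lambda>i. kron (P1 i (a1 i)) (P2 i (a2 i)))
          (\<lambda>i. kron (P1 i (b1 i)) (P2 i (b2 i))) n"
    unfolding kd_both_st_eq_sandwich_st by (rule sandwich_st_cong) (simp_all add: prod_P_pair_outcomes)
  then show ?thesis
    unfolding QKD_both_def pq using P1 P2
    by (simp add: kd_both_st_eq_sandwich_st mtrace_sandwich_st_kron[OF pr1 pr2])
qed

lemma negN_logN_product:
  fixes Q :: "'z \<Rightarrow> complex" and F :: "'x \<Rightarrow> complex" and G :: "'y \<Rightarrow> complex"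
  assumes bij: "bij_betw (\<lambda>(x, y). h x y) (X \<times> Y) Z"
    and Q: "\<And>x y. x \<in> X \<Longrightarrow> y \<in> Y \<Longrightarrow> Q (h x y) = F x * G y"
    and F: "(\<Sum>x\<in>X. F x) = 1" and G: "(\<Sum>y\<in>Y. G y) = 1"
  shows "negN Q Z = negN F X * negN G Y + negN F X + negN G Y \<and> logN Q Z = logN F X + logN G Y"
proof -
  have "(\<Sum>z\<in>Z. cmod (Q z)) = (\<Sum>p\<in>X \<times> Y. cmod (F (fst p)) * cmod (G (snd p)))"
    by (subst sum.reindex_bij_betw[OF bij, symmetric]) (auto intro!: sum.cong simp: Q norm_mult)
  also have "\<dots> = (\<Sum>x\<in>X. cmod (F x)) * (\<Sum>y\<in>Y. cmod (G y))"
    by (simp add: sum.cartesian_product' sum_product)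
  finally have S: "(\<Sum>z\<in>Z. cmod (Q z)) = (\<Sum>x\<in>X. cmod (F x)) * (\<Sum>y\<in>Y. cmod (G y))" .
  have "1 \<le> (\<Sum>x\<in>X. cmod (F x))" and "1 \<le> (\<Sum>y\<in>Y. cmod (G y))"
    using norm_sum[of F X] norm_sum[of G Y] F G by simp_all
  then show ?thesis
    unfolding negN_def logN_def S by (simp add: algebra_simps ln_mult_pos)
qed

theorem mainTheorem10:
  fixes n :: nat and d1 d2 :: "nat \<Rightarrow> nat"
    and \<rho>1 \<rho>2 :: "complex mat"
    and E1 E2 :: "nat \<Rightarrow> complex mat \<Rightarrow> complex mat"
    and B1 :: "nat \<Rightarrow> 'b set" and P1 :: "nat \<Rightarrow> 'b \<Rightarrow> complex mat"
    and B2 :: "nat \<Rightarrow> 'c set" and P2 :: "nat \<Rightarrow> 'c \<Rightarrow> complex mat"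
  assumes p1: "mt_process n d1 \<rho>1 E1 B1 P1"
    and p2: "mt_process n d2 \<rho>2 E2 B2 P2"
  defines "\<rho> \<equiv> kron \<rho>1 \<rho>2"
    and "E \<equiv> prod_E d1 d2 E1 E2"
    and "B \<equiv> prod_B B1 B2"
    and "P \<equiv> prod_P P1 P2"
  shows
   "negN (QKD_right n \<rho> E P) (outcomes n B) =
      negN (QKD_right n \<rho>1 E1 P1) (outcomes n B1) * negN (QKD_right n \<rho>2 E2 P2) (outcomes n B2)
      + negN (QKD_right n \<rho>1 E1 P1) (outcomes n B1) + negN (QKD_right n \<rho>2 E2 P2) (outcomes n B2)
    \<and> logN (QKD_right n \<rho> E P) (outcomes n B) =
      logN (QKD_right n \<rho>1 E1 P1) (outcomes n B1) + logN (QKD_right n \<rho>2 E2 P2) (outcomes n B2)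
    \<and> negN (QKD_left n \<rho> E P) (outcomes n B) =
      negN (QKD_left n \<rho>1 E1 P1) (outcomes n B1) * negN (QKD_left n \<rho>2 E2 P2) (outcomes n B2)
      + negN (QKD_left n \<rho>1 E1 P1) (outcomes n B1) + negN (QKD_left n \<rho>2 E2 P2) (outcomes n B2)
    \<and> logN (QKD_left n \<rho> E P) (outcomes n B) =
      logN (QKD_left n \<rho>1 E1 P1) (outcomes n B1) + logN (QKD_left n \<rho>2 E2 P2) (outcomes n B2)
    \<and> negN (QKD_both n \<rho> E P) (outcomes n B \<times> outcomes n B) =
      negN (QKD_both n \<rho>1 E1 P1) (outcomes n B1 \<times> outcomes n B1)
        * negN (QKD_both n \<rho>2 E2 P2) (outcomes n B2 \<times> outcomes n B2)
      + negN (QKD_both n \<rho>1 E1 P1) (outcomes n B1 \<times> outcomes n B1)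
      + negN (QKD_both n \<rho>2 E2 P2) (outcomes n B2 \<times> outcomes n B2)
    \<and> logN (QKD_both n \<rho> E P) (outcomes n B \<times> outcomes n B) =
      logN (QKD_both n \<rho>1 E1 P1) (outcomes n B1 \<times> outcomes n B1)
      + logN (QKD_both n \<rho>2 E2 P2) (outcomes n B2 \<times> outcomes n B2)"
proof -
  let ?\<rho> = "kron \<rho>1 \<rho>2" and ?E = "prod_E d1 d2 E1 E2" and ?P = "prod_P P1 P2"
  note right = negN_logN_product[where Q = "QKD_right n ?\<rho> ?E ?P" and F = "QKD_right n \<rho>1 E1 P1"
      and G = "QKD_right n \<rho>2 E2 P2", OF bij_betw_pair_outcomes QKD_right_product[OF p1 p2]
      sum_QKD_right[OF p1] sum_QKD_right[OF p2]]
  note left = negN_logN_product[where Q = "QKD_left n ?\<rho> ?E ?P" and F = "QKD_left n \<rho>1 E1 P1"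
      and G = "QKD_left n \<rho>2 E2 P2", OF bij_betw_pair_outcomes QKD_left_product[OF p1 p2]
      sum_QKD_left[OF p1] sum_QKD_left[OF p2]]
  note both = negN_logN_product[where Q = "QKD_both n ?\<rho> ?E ?P" and F = "QKD_both n \<rho>1 E1 P1"
      and G = "QKD_both n \<rho>2 E2 P2", OF bij_betw_pair_outcomes_pairs QKD_both_product[OF p1 p2]
      sum_QKD_both[OF p1] sum_QKD_both[OF p2]]
  show ?thesis
    unfolding \<rho>_def E_def B_def P_def using right left both by blast
qed

end
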